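(* For any $n\in\mathbb{N}$, $(\mathcal{A}_n,L)$ is a biautomatic structure for $\mathrm{lps}_n$, where $L$ is the set of all words $\alpha^1\alpha^2\cdots\alpha^k$ ($k\geq0$) such that each $\alpha^i$ is a nonempty strictly decreasing word over $\mathcal{A}_n$ and, writing $\alpha^i_1$ for the last (smallest) letter of $\alpha^i$, $\alpha^1_1\leq\alpha^2_1\leq\cdots\leq\alpha^k_1$.
   Context: Let $\mathcal{A}_n=\{1<2<\cdots<n\}$. An lPS tableau is a finite (possibly empty) sequence of nonempty bottom-justified columns of boxes filled with positive integers, such that the entries of each column are strictly decreasing from top to bottom and the bottom entries of the columns form a weakly increasing sequence from left to right. Right insertion of a symbol $a$ into an lPS tableau $B$: if $a$ is greater than or equal to every entry of the bottom row, append a new column consisting of $a$ at the right end; otherwise, let $z$ be the leftmost bottom-row entry with $z>a$ and put $a$ in a new box at the bottom of the column of $z$ (the previous entries of that column move up one box). For $w=w_1\cdots w_k$, $\mathfrak{R}_\ell(w)$ is obtained by starting with the empty tableau and right-inserting $w_1,\dots,w_k$ in order. The monoid $\mathrm{lps}_n$ is the quotient of $\mathcal{A}_n^*$ by the congruence $u\equiv v\iff\mathfrak{R}_\ell(u)=\mathfrak{R}_\ell(v)$; words are identified with the elements they represent. For an alphabet $\Sigma$ and a padding symbol $\$\notin\Sigma$, $\delta_R:\Sigma^*\times\Sigma^*\to((\Sigma\cup\{\$\})\times(\Sigma\cup\{\$\}))^*$ sends $(u_1\cdots u_m,v_1\cdots v_p)$ to the word of pairs $(u_i,v_i)$ obtained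 after padding the shorter word on the right with $\$$'s to equal length; $\delta_L$ is the same with padding on the left. For a monoid $M$ generated by finite $\Sigma$ and a regular language $L\subseteq\Sigma^*$ mapping onto $M$, define $L_a=\{(u,v)\in L\times L: ua=_M v\}$ and ${}_aL=\{(u,v)\in L\times L: au=_M v\}$. $(\Sigma,L)$ is a biautomatic structure for $M$ if $(L_a)\delta_R$, $({}_aL)\delta_R$, $(L_a)\delta_L$ and $({}_aL)\delta_L$ are regular languages for every $a\in\Sigma\cup\{\varepsilon\}$. *)

theory Defs
  imports Main
begin

text \<open>An lPS tableau is a list of columns (left to right); each column is a list of
  entries listed from top to bottom, so the bottom entry of a column is its last element.\<close>

type_synonym tableau = "nat list list"

fun rinsert :: "nat \<Rightarrow> tableau \<Rightarrow> tableau" where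
  "rinsert a [] = [[a]]"
| "rinsert a (c # B) = (if a < last c then (c @ [a]) # B else c # rinsert a B)"

definition Rl :: "nat list \<Rightarrow> tableau" where
  "Rl w = foldl (\<lambda>B a. rinsert a B) [] w"

definition lps_eq :: "nat list \<Rightarrow> nat list \<Rightarrow> bool" where
  "lps_eq u v \<longleftrightarrow> Rl u = Rl v"

definition regular_over :: "'a set \<Rightarrow> 'a list set \<Rightarrow> bool" where
  "regular_over \<Gamma> L \<longleftrightarrow> L \<subseteq> lists \<Gamma> \<and>
     (\<exists>(Q::nat set) q0 (\<delta>::nat \<Rightarrow> 'a \<Rightarrow> nat) F.
        finite Q \<and> q0 \<in> Q \<and> (\<forall>q\<in>Q. \<forall>x\<in>\<Gamma>. \<delta> q x \<in> Q) \<and> F \<subseteq> Q \<and>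
        L = {w \<in> lists \<Gamma>. foldl \<delta> q0 w \<in> F})"

definition deltaR :: "'a list \<Rightarrow> 'a list \<Rightarrow> ('a option \<times> 'a option) list" where
  "deltaR u v = (let m = max (length u) (length v) in
     zip (map Some u @ replicate (m - length u) None) (map Some v @ replicate (m - length v) None))"

definition deltaL :: "'a list \<Rightarrow> 'a list \<Rightarrow> ('a option \<times> 'a option) list" where
  "deltaL u v = (let m = max (length u) (length v) in
     zip (replicate (m - length u) None @ map Some u) (replicate (m - length v) None @ map Some v))"

definition pad_alphabet :: "'a set \<Rightarrow> ('a option \<times> 'a option) set" where
  "pad_alphabet \<Sigma> = insert None (Some ` \<Sigma>) \<times> insert None (Some ` \<Sigma>)"

text \<open>The monoid is presented as the quotient of \<Sigma>* by the congruence eqv.\<close>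

definition Lright :: "('a list \<Rightarrow> 'a list \<Rightarrow> bool) \<Rightarrow> 'a list set \<Rightarrow> 'a list \<Rightarrow> ('a list \<times> 'a list) set" where
  "Lright eqv L a = {(u, v). u \<in> L \<and> v \<in> L \<and> eqv (u @ a) v}"

definition Lleft :: "('a list \<Rightarrow> 'a list \<Rightarrow> bool) \<Rightarrow> 'a list set \<Rightarrow> 'a list \<Rightarrow> ('a list \<times> 'a list) set" where
  "Lleft eqv L a = {(u, v). u \<in> L \<and> v \<in> L \<and> eqv (a @ u) v}"

definition biautomatic_structure ::
  "'a set \<Rightarrow> ('a list \<Rightarrow> 'a list \<Rightarrow> bool) \<Rightarrow> 'a list set \<Rightarrow> bool" where
  "biautomatic_structure \<Sigma> eqv L \<longleftrightarrow>
     finite \<Sigma> \<and> regular_over \<Sigma> L \<and> (\<forall>w \<in> lists \<Sigma>. \<exists>u \<in> L. eqv w u) \<and>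
     (\<forall>a \<in> insert [] ((\<lambda>x. [x]) ` \<Sigma>).
        regular_over (pad_alphabet \<Sigma>) ((\<lambda>(u, v). deltaR u v) ` Lright eqv L a) \<and>
        regular_over (pad_alphabet \<Sigma>) ((\<lambda>(u, v). deltaR u v) ` Lleft eqv L a) \<and>
        regular_over (pad_alphabet \<Sigma>) ((\<lambda>(u, v). deltaL u v) ` Lright eqv L a) \<and>
        regular_over (pad_alphabet \<Sigma>) ((\<lambda>(u, v). deltaL u v) ` Lleft eqv L a))"

definition lpsL :: "nat \<Rightarrow> nat list set" where
  "lpsL n = {concat xs | xs.
     (\<forall>\<alpha> \<in> set xs. \<alpha> \<noteq> [] \<and> sorted_wrt (>) \<alpha> \<and> set \<alpha> \<subseteq> {1..n}) \<and> sorted (map last xs)}"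

end

theory Submission
  imports Defs
begin

text \<open>The column reading concat (Rl w) of the lPS tableau of w is a normal form for lps_n, and L is
  exactly the set of column readings of lPS tableaux. Hence L_a and aL consist of the pairs
  (u, nf (u a)) and (u, nf (a u)) with u in L. Reading u = concat T column by column, nf (u x) puts x
  under the first column whose bottom entry exceeds x, and nf (x u) is x followed by the columns of T,
  each reordered around a threshold passed on from the previous column. So every padded convolution
  is written column by column by a transducer that remembers a bounded number of letters, and a
  finite automaton reading blocks of bounded length accepts a regular language (Myhill-Nerode).\<close>

section \<open>Left quotients and regular languages\<close>

definition lquot :: "'a list \<Rightarrow> 'a list set \<Rightarrow> 'a list set" where
  "lquot z K = {w. z @ w \<in> K}"

lemma lquot_append: "lquot (z @ z') K = lquot z' (lquot z K)"
  by (simp add: lquot_def)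

lemma regular_over_if_finite_lquots:
  assumes sub: "K \<subseteq> lists \<Gamma>" and fin: "finite ((\<lambda>z. lquot z K) ` lists \<Gamma>)"
  shows "regular_over \<Gamma> K"
proof -
  define Qs where "Qs = (\<lambda>z. lquot z K) ` lists \<Gamma>"
  have "finite Qs" using fin by (simp add: Qs_def)
  then obtain h where h: "bij_betw h Qs {0..<card Qs}"
    using ex_bij_betw_finite_nat by blast
  have inj: "inj_on h Qs" and hQ: "\<And>X. X \<in> Qs \<Longrightarrow> h X \<in> {0..<card Qs}"
    using bij_betw_imp_inj_on[OF h] bij_betwE[OF h] by auto
  define \<delta> where "\<delta> q a = h (lquot [a] (inv_into Qs h q))" for q a
  define F where "F = h ` {X \<in> Qs. [] \<in> X}"
  have inQs: "lquot z K \<in> Qs" if "z \<in> lists \<Gamma>" for z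
    using that Qs_def by blast
  have step: "\<delta> (h (lquot z K)) a = h (lquot (z @ [a]) K)" if "z \<in> lists \<Gamma>" for z a
    using inv_into_f_f[OF inj inQs[OF that]] by (simp add: \<delta>_def lquot_append)
  have run: "foldl \<delta> (h K) w = h (lquot w K)" if "w \<in> lists \<Gamma>" for w
    using that
  proof (induction w rule: rev_induct)
    case Nil show ?case by (simp add: lquot_def)
  next
    case (snoc a w) then show ?case using step[of w a] by simp
  qed
  have K_accepted: "K = {w \<in> lists \<Gamma>. foldl \<delta> (h K) w \<in> F}"
  proof (intro set_eqI iffI)
    fix w assume "w \<in> K"
    moreover from this have "w \<in> lists \<Gamma>" using sub by blast
    ultimately show "w \<in> {w \<in> lists \<Gamma>. foldl \<delta> (h K) w \<in> F}"
      using run inQs unfolding F_def by (auto simp: lquot_def)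
  next
    fix w assume "w \<in> {w \<in> lists \<Gamma>. foldl \<delta> (h K) w \<in> F}"
    then have w: "w \<in> lists \<Gamma>" and "foldl \<delta> (h K) w \<in> F" by auto
    then obtain X where "X \<in> Qs" "[] \<in> X" "h X = h (lquot w K)"
      using run[OF w] unfolding F_def by auto
    then have "X = lquot w K" using inj inQs[OF w] by (simp add: inj_on_eq_iff)
    with \<open>[] \<in> X\<close> show "w \<in> K" by (simp add: lquot_def)
  qed
  have closed: "\<forall>q\<in>{0..<card Qs}. \<forall>a\<in>\<Gamma>. \<delta> q a \<in> {0..<card Qs}"
  proof (intro ballI)
    fix q a assume "q \<in> {0..<card Qs}" "a \<in> \<Gamma>"
    moreover obtain z where "z \<in> lists \<Gamma>" "q = h (lquot z K)"
    proof -
      have "q \<in> h ` Qs" using \<open>q \<in> {0..<card Qs}\<close> bij_betw_imp_surj_on[OF h] by simp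
      then show ?thesis using that unfolding Qs_def by blast
    qed
    ultimately show "\<delta> q a \<in> {0..<card Qs}" using step hQ inQs by simp
  qed
  have "h K \<in> {0..<card Qs}" using hQ inQs[of "[]"] by (simp add: lquot_def)
  moreover have "F \<subseteq> {0..<card Qs}" using hQ F_def by blast
  ultimately show ?thesis
    unfolding regular_over_def using sub closed K_accepted
    by (intro conjI exI[of _ "{0..<card Qs}"] exI[of _ "h K"] exI[of _ \<delta>] exI[of _ F]
        finite_atLeastLessThan)
qed

lemma finite_lquots_if_regular_over:
  assumes "regular_over \<Gamma> K"
  shows "finite ((\<lambda>z. lquot z K) ` lists \<Gamma>)"
proof -
  obtain Q :: "nat set" and q0 \<delta> F where Q: "finite Q" "q0 \<in> Q" "\<forall>q\<in>Q. \<forall>a\<in>\<Gamma>. \<delta> q a \<in> Q"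
    and K: "K = {w \<in> lists \<Gamma>. foldl \<delta> q0 w \<in> F}"
    using assms unfolding regular_over_def by blast
  have closed: "foldl \<delta> q z \<in> Q" if "z \<in> lists \<Gamma>" "q \<in> Q" for z q
    using that Q(3) by (induction z arbitrary: q) auto
  have "lquot z K = {w \<in> lists \<Gamma>. foldl \<delta> (foldl \<delta> q0 z) w \<in> F}" if "z \<in> lists \<Gamma>" for z
    using that by (auto simp: lquot_def K)
  then have "(\<lambda>z. lquot z K) ` lists \<Gamma> \<subseteq> (\<lambda>q. {w \<in> lists \<Gamma>. foldl \<delta> q w \<in> F}) ` Q"
    using closed Q(2) by blast
  then show ?thesis using Q(1) finite_surj by blast
qed

theorem regular_over_iff_finite_lquots:
  "regular_over \<Gamma> K \<longleftrightarrow> K \<subseteq> lists \<Gamma> \<and> finite ((\<lambda>z. lquot z K) ` lists \<Gamma>)"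
proof
  assume "regular_over \<Gamma> K"
  then show "K \<subseteq> lists \<Gamma> \<and> finite ((\<lambda>z. lquot z K) ` lists \<Gamma>)"
    using finite_lquots_if_regular_over by (simp add: regular_over_def)
qed (simp add: regular_over_if_finite_lquots)

lemma regular_over_Cons:
  assumes "regular_over \<Gamma> K" "a \<in> \<Gamma>"
  shows "regular_over \<Gamma> ((#) a ` K)"
proof -
  have K: "K \<subseteq> lists \<Gamma>" "finite ((\<lambda>z. lquot z K) ` lists \<Gamma>)"
    using assms(1) regular_over_iff_finite_lquots by blast+
  have "lquot z ((#) a ` K) \<in> {(#) a ` K, {}} \<union> (\<lambda>z. lquot z K) ` lists \<Gamma>"
    if "z \<in> lists \<Gamma>" for z
  proof (cases z)
    case (Cons b z')
    have "lquot z ((#) a ` K) = (if b = a then lquot z' K else {})"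
      unfolding Cons lquot_def by auto
    then show ?thesis using that Cons by auto
  qed (simp add: lquot_def)
  then have "(\<lambda>z. lquot z ((#) a ` K)) ` lists \<Gamma> \<subseteq> {(#) a ` K, {}} \<union> (\<lambda>z. lquot z K) ` lists \<Gamma>"
    by blast
  moreover have "(#) a ` K \<subseteq> lists \<Gamma>"
    using K(1) assms(2) by (fastforce simp: subset_iff)
  ultimately show ?thesis
    unfolding regular_over_iff_finite_lquots using K(2) by (simp add: finite_subset)
qed

section \<open>Automata reading blocks of bounded length\<close>

inductive block_reach :: "('s \<Rightarrow> 'a list \<Rightarrow> 's \<Rightarrow> bool) \<Rightarrow> 's \<Rightarrow> 'a list \<Rightarrow> 's \<Rightarrow> bool"
  for T where
  block_reach_Nil: "block_reach T s [] s"
| block_reach_step: "T s b s' \<Longrightarrow> block_reach T s' w t \<Longrightarrow> block_reach T s (b @ w) t"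

lemma block_reach_append:
  "block_reach T s x m \<Longrightarrow> block_reach T m y t \<Longrightarrow> block_reach T s (x @ y) t"
proof (induction rule: block_reach.induct)
  case (block_reach_step s b s' w m)
  then show ?case using block_reach.block_reach_step[of T s b s' "w @ y" t] by simp
qed simp

lemma block_reach_split:
  assumes "block_reach T s (z @ w) t"
  shows "\<exists>z1 p s1. z = z1 @ p \<and> block_reach T s z1 s1 \<and> block_reach T s1 (p @ w) t \<and>
    (p = [] \<or> (\<exists>b s'. T s1 (p @ b) s'))"
  using assms
proof (induction "z @ w" t arbitrary: z rule: block_reach.induct)
  case (block_reach_Nil s)
  then show ?case
    by (intro exI[of _ "[]"] exI[of _ "[]"] exI[of _ s]) (simp add: block_reach.block_reach_Nil)
next
  case (block_reach_step s b s' w' t)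
  show ?case
  proof (cases "length b \<le> length z")
    case True
    then obtain z' where z': "z = b @ z'" "w' = z' @ w"
      using block_reach_step.hyps(4) by (metis append_eq_append_conv_if append_take_drop_id)
    with block_reach_step.hyps(3) obtain z1 p s1 where "z' = z1 @ p" "block_reach T s' z1 s1"
      "block_reach T s1 (p @ w) t" "p = [] \<or> (\<exists>b s'. T s1 (p @ b) s')"
      by blast
    moreover have "block_reach T s (b @ z1) s1"
      using block_reach_step.hyps(1) \<open>block_reach T s' z1 s1\<close> by (rule block_reach.block_reach_step)
    moreover have "z = (b @ z1) @ p" using z' \<open>z' = z1 @ p\<close> by simp
    ultimately show ?thesis by (intro exI[of _ "b @ z1"] exI[of _ p] exI[of _ s1]) simp
  next
    case False
    then obtain b2 where "b = z @ b2"
      using block_reach_step.hyps(4) by (metis append_eq_append_conv_if append_take_drop_id)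
    with block_reach_step.hyps(1) have "\<exists>b s'. T s (z @ b) s'" by blast
    moreover have "block_reach T s (z @ w) t"
      using block_reach.block_reach_step[OF block_reach_step.hyps(1,2)] block_reach_step.hyps(4) by simp
    ultimately show ?thesis
      by (intro exI[of _ "[]"] exI[of _ z] exI[of _ s]) (simp add: block_reach_Nil)
  qed
qed

lemma block_reach_closed:
  assumes "block_reach T s w t" "s \<in> S"
    and "\<And>s b s'. s \<in> S \<Longrightarrow> T s b s' \<Longrightarrow> s' \<in> S \<and> set b \<subseteq> \<Gamma>"
  shows "t \<in> S \<and> set w \<subseteq> \<Gamma>"
  using assms(1,2) by (induction rule: block_reach.induct) (use assms(3) in fastforce)+

text \<open>After reading a prefix z, the automaton sits in some state s1 in the middle of a block, having
  read a prefix p of it; the pair (s1, p) ranges over a finite set and determines what may follow.\<close>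

theorem regular_block_reach:
  assumes "finite S" "finite \<Gamma>" "s0 \<in> S"
    and T: "\<And>s b s'. s \<in> S \<Longrightarrow> T s b s' \<Longrightarrow> s' \<in> S \<and> set b \<subseteq> \<Gamma> \<and> length b \<le> N"
  shows "regular_over \<Gamma> {w. block_reach T s0 w t0}"
proof (rule regular_over_if_finite_lquots)
  let ?K = "\<lambda>s. {w. block_reach T s w t0}"
  have closed: "t \<in> S \<and> set w \<subseteq> \<Gamma>" if "block_reach T s0 w t" for w t
    by (rule block_reach_closed[OF that \<open>s0 \<in> S\<close>]) (use T in blast)
  then show "?K s0 \<subseteq> lists \<Gamma>" by auto
  define P where "P = S \<times> {p. set p \<subseteq> \<Gamma> \<and> length p \<le> N}"
  have "finite P"
    unfolding P_def using assms(1) finite_lists_length_le[OF assms(2)] by blast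
  define conf where "conf z = {(s1, p) \<in> P. \<exists>z1. z = z1 @ p \<and> block_reach T s0 z1 s1}" for z
  have lquot_conf: "lquot z (?K s0) = (\<Union>(s1, p) \<in> conf z. lquot p (?K s1))" for z
  proof (intro set_eqI iffI)
    fix w assume "w \<in> lquot z (?K s0)"
    then have reach: "block_reach T s0 (z @ w) t0" by (simp add: lquot_def)
    then obtain z1 p s1 where split: "z = z1 @ p" "block_reach T s0 z1 s1"
      "block_reach T s1 (p @ w) t0" "p = [] \<or> (\<exists>b s'. T s1 (p @ b) s')"
      using block_reach_split[OF reach] by blast
    have "s1 \<in> S" using closed split(2) by blast
    with split(4) have "set p \<subseteq> \<Gamma> \<and> length p \<le> N"
      using T by fastforce
    with split \<open>s1 \<in> S\<close> show "w \<in> (\<Union>(s1, p) \<in> conf z. lquot p (?K s1))"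
      unfolding conf_def P_def lquot_def by blast
  next
    fix w assume "w \<in> (\<Union>(s1, p) \<in> conf z. lquot p (?K s1))"
    then obtain s1 p z1 where "z = z1 @ p" "block_reach T s0 z1 s1" "block_reach T s1 (p @ w) t0"
      unfolding conf_def lquot_def by blast
    then show "w \<in> lquot z (?K s0)"
      using block_reach_append by (fastforce simp: lquot_def)
  qed
  have "(\<lambda>z. lquot z (?K s0)) ` lists \<Gamma> \<subseteq> (\<lambda>X. \<Union>(s1, p) \<in> X. lquot p (?K s1)) ` Pow P"
  proof (rule image_subsetI)
    fix z
    have "conf z \<in> Pow P" by (auto simp: conf_def)
    then show "lquot z (?K s0) \<in> (\<lambda>X. \<Union>(s1, p) \<in> X. lquot p (?K s1)) ` Pow P"
      unfolding lquot_conf by (rule imageI)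
  qed
  then show "finite ((\<lambda>z. lquot z (?K s0)) ` lists \<Gamma>)"
    by (rule finite_subset) (intro finite_imageI, simp add: \<open>finite P\<close>)
qed

section \<open>Column readings of lPS tableaux\<close>

definition column :: "nat \<Rightarrow> nat list \<Rightarrow> bool" where
  "column n C \<longleftrightarrow> C \<noteq> [] \<and> sorted_wrt (>) C \<and> set C \<subseteq> {1..n}"

fun lps_tableau_above :: "nat \<Rightarrow> nat \<Rightarrow> tableau \<Rightarrow> bool" where
  "lps_tableau_above n b [] \<longleftrightarrow> True"
| "lps_tableau_above n b (C # Cs) \<longleftrightarrow> column n C \<and> b \<le> last C \<and> lps_tableau_above n (last C) Cs"

abbreviation lps_tableau :: "nat \<Rightarrow> tableau \<Rightarrow> bool" where
  "lps_tableau n \<equiv> lps_tableau_above n 0"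

lemma last_le_of_sorted_dec:
  "sorted_wrt (>) (C :: nat list) \<Longrightarrow> y \<in> set C \<Longrightarrow> last C \<le> y"
  by (induction C) (auto, metis last_in_set less_imp_le)

lemma length_column_le: "column n C \<Longrightarrow> length C \<le> n"
proof -
  assume C: "column n C"
  then have "sorted_wrt (>) C" by (simp add: column_def)
  then have "distinct C" by (induction C) auto
  then have "length C = card (set C)" by (simp add: distinct_card)
  also have "\<dots> \<le> n" using C card_mono[of "{1..n}" "set C"] by (simp add: column_def)
  finally show ?thesis .
qed

lemma last_column: "column n C \<Longrightarrow> last C \<in> {1..n}"
  unfolding column_def using last_in_set by blast

lemma lps_tableau_above_mono: "lps_tableau_above n b T \<Longrightarrow> b' \<le> b \<Longrightarrow> lps_tableau_above n b' T"
  by (cases T) auto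

lemma lps_tableau_above_iff:
  "lps_tableau_above n b T \<longleftrightarrow> (\<forall>C\<in>set T. column n C \<and> b \<le> last C) \<and> sorted (map last T)"
  by (induction T arbitrary: b) (auto intro: order_trans)

lemma lpsL_eq: "lpsL n = concat ` {T. lps_tableau n T}"
  unfolding lpsL_def lps_tableau_above_iff column_def by auto

lemma set_concat_lps_tableau: "lps_tableau_above n b T \<Longrightarrow> set (concat T) \<subseteq> {1..n}"
  by (induction T arbitrary: b) (auto simp: column_def)

lemma lps_tableau_above_rinsert:
  "lps_tableau_above n b T \<Longrightarrow> a \<in> {1..n} \<Longrightarrow> b \<le> a \<Longrightarrow> lps_tableau_above n b (rinsert a T)"
proof (induction T arbitrary: b)
  case Nil
  then show ?case by (simp add: column_def)
next
  case (Cons c T)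
  show ?case
  proof (cases "a < last c")
    case True
    with Cons.prems have "column n (c @ [a])"
      by (auto simp: column_def sorted_wrt_append dest: last_le_of_sorted_dec)
    with True Cons.prems show ?thesis
      using lps_tableau_above_mono[of n "last c" T a] by auto
  next
    case False
    with Cons show ?thesis by auto
  qed
qed

definition rinserts :: "tableau \<Rightarrow> nat list \<Rightarrow> tableau" where
  "rinserts T w = foldl (\<lambda>B a. rinsert a B) T w"

lemma rinserts_simps [simp]:
  "rinserts T [] = T"
  "rinserts T (a # w) = rinserts (rinsert a T) w"
  "rinserts T (u @ v) = rinserts (rinserts T u) v"
  by (simp_all add: rinserts_def)

lemma Rl_eq_rinserts: "Rl w = rinserts [] w"
  by (simp add: Rl_def rinserts_def)

lemma Rl_snoc: "Rl (w @ [a]) = rinsert a (Rl w)"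
  by (simp add: Rl_def)

lemma lps_tableau_Rl: "set w \<subseteq> {1..n} \<Longrightarrow> lps_tableau n (Rl w)"
proof (induction w rule: rev_induct)
  case (snoc a w)
  then show ?case by (simp add: Rl_snoc lps_tableau_above_rinsert)
qed (simp add: Rl_def)

lemma rinserts_append_skip:
  assumes "\<forall>c\<in>set T0. \<forall>a\<in>set w. last c \<le> a"
  shows "rinserts (T0 @ T1) w = T0 @ rinserts T1 w"
proof -
  have "rinsert a (T0 @ T1) = T0 @ rinsert a T1" if "\<forall>c\<in>set T0. last c \<le> a" for a T1
    using that by (induction T0) auto
  with assms show ?thesis by (induction w arbitrary: T1) auto
qed

lemma rinserts_below:
  "P \<noteq> [] \<Longrightarrow> sorted_wrt (>) C \<Longrightarrow> \<forall>y\<in>set C. y < last P \<Longrightarrow> rinserts (P # T) C = (P @ C) # T"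
  by (induction C arbitrary: P) auto

lemma rinserts_new_column:
  assumes "C \<noteq> []" "sorted_wrt (>) C" "\<forall>c\<in>set T. last c \<le> last C"
  shows "rinserts T C = T @ [C]"
proof -
  obtain y C' where C: "C = y # C'" using assms(1) by (cases C) auto
  have "rinserts T C = T @ rinserts [] C"
    using rinserts_append_skip[of T C "[]"] assms last_le_of_sorted_dec[OF assms(2)]
    by (fastforce intro: order_trans)
  also have "rinserts [] C = [C]"
    using rinserts_below[of "[y]" C' "[]"] assms(2) C by simp
  finally show ?thesis .
qed

lemma rinserts_concat:
  "lps_tableau_above n b T \<Longrightarrow> \<forall>c\<in>set T0. last c \<le> b \<Longrightarrow> rinserts T0 (concat T) = T0 @ T"
proof (induction T arbitrary: T0 b)
  case (Cons C T)
  then have "rinserts T0 C = T0 @ [C]"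
    by (intro rinserts_new_column) (auto simp: column_def intro: order_trans)
  moreover have "\<forall>c\<in>set (T0 @ [C]). last c \<le> last C"
    using Cons.prems by (auto intro: order_trans)
  ultimately show ?case using Cons.IH[of "last C" "T0 @ [C]"] Cons.prems by simp
qed simp

theorem Rl_concat: "lps_tableau n T \<Longrightarrow> Rl (concat T) = T"
  using rinserts_concat[of n 0 T "[]"] by (simp add: Rl_eq_rinserts)

lemma sorted_dec_split:
  "sorted_wrt (>) (C :: nat list) \<Longrightarrow> C = filter (\<lambda>y. t \<le> y) C @ filter (\<lambda>y. y < t) C"
proof (induction C)
  case (Cons c C)
  show ?case
  proof (cases "c < t")
    case True
    with Cons.prems have "\<forall>y\<in>set C. y < t" by auto
    with True show ?thesis by (auto simp: filter_id_conv filter_empty_conv)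
  qed (use Cons in auto)
qed simp

lemma rinserts_column_split:
  assumes "P \<noteq> []" "sorted_wrt (>) C"
  defines "Q \<equiv> filter (\<lambda>y. last P \<le> y) C" and "S \<equiv> filter (\<lambda>y. y < last P) C"
  shows "rinserts [P] C = (P @ S) # (if Q = [] then [] else [Q])"
proof -
  have C: "C = Q @ S" using sorted_dec_split[OF assms(2)] by (simp add: Q_def S_def)
  have S_below: "rinserts (P # T) S = (P @ S) # T" for T
    using assms(1,2) by (intro rinserts_below) (auto simp: S_def sorted_wrt_filter)
  show ?thesis
  proof (cases "Q = []")
    case False
    then have "last Q \<in> set Q" by simp
    then have "rinserts [P] Q = [P, Q]"
      using rinserts_new_column[of Q "[P]"] False assms(2) by (simp add: Q_def sorted_wrt_filter)
    with False show ?thesis using C S_below[of "[Q]"] by simp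
  qed (use C S_below[of "[]"] in simp)
qed

text \<open>Left multiplication by x, read off the column reading word: with t the bottom entry of the
  column bumped so far (initially Some x), the entries of C below t drop under that column and the
  others form the next bumped column, so C is read as rot t C; once nothing is bumped (None) the
  remaining columns are unchanged.\<close>

definition rot :: "nat option \<Rightarrow> nat list \<Rightarrow> nat list" where
  "rot t C = (case t of None \<Rightarrow> C | Some t \<Rightarrow> filter (\<lambda>y. y < t) C @ filter (\<lambda>y. t \<le> y) C)"

definition bump :: "nat option \<Rightarrow> nat list \<Rightarrow> nat option" where
  "bump t C = (case t of None \<Rightarrow> None
     | Some t \<Rightarrow> (let Q = filter (\<lambda>y. t \<le> y) C in if Q = [] then None else Some (last Q)))"

fun rots :: "nat option \<Rightarrow> tableau \<Rightarrow> tableau" where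
  "rots t [] = []"
| "rots t (C # T) = rot t C # rots (bump t C) T"

lemma rots_None [simp]: "rots None T = T"
  by (induction T) (simp_all add: rot_def bump_def)

lemma length_rot [simp]: "length (rot t C) = length C"
proof (cases t)
  case (Some a)
  then show ?thesis using sum_length_filter_compl[of "\<lambda>y. y < a" C] by (simp add: rot_def not_less)
qed (simp add: rot_def)

lemma set_rot [simp]: "set (rot t C) = set C"
  by (cases t) (auto simp: rot_def)

lemma rot_eq_Nil_iff [simp]: "rot t C = [] \<longleftrightarrow> C = []"
  using length_rot[of t C] by (metis length_0_conv)

lemma bump_in: "bump t C \<in> insert None (Some ` set C)"
proof -
  have "last (filter P C) \<in> set C" if "filter P C \<noteq> []" for P
    using last_in_set[OF that] by simp
  then show ?thesis by (cases t) (auto simp: bump_def Let_def)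
qed

lemma concat_rinserts_concat:
  assumes "P \<noteq> []" "lps_tableau_above n b T" "\<forall>c\<in>set T0. last c \<le> b"
  shows "concat (rinserts (T0 @ [P]) (concat T)) = concat T0 @ P @ concat (rots (Some (last P)) T)"
  using assms
proof (induction T arbitrary: T0 P b)
  case (Cons C T)
  define Q S where "Q = filter (\<lambda>y. last P \<le> y) C" and "S = filter (\<lambda>y. y < last P) C"
  have C: "column n C" "b \<le> last C" "lps_tableau_above n (last C) T"
    using Cons.prems(2) by simp_all
  then have dec: "sorted_wrt (>) C" and "C = Q @ S"
    using sorted_dec_split[of C "last P"] by (simp_all add: column_def Q_def S_def)
  have "rinserts (T0 @ [P]) C = T0 @ rinserts [P] C"
    using Cons.prems(3) C(2) last_le_of_sorted_dec[OF dec]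
    by (intro rinserts_append_skip) (fastforce intro: order_trans)
  also have "\<dots> = T0 @ (P @ S) # (if Q = [] then [] else [Q])"
    using rinserts_column_split[OF Cons.prems(1) dec] by (simp add: Q_def S_def)
  finally have step: "rinserts (T0 @ [P]) C = (T0 @ [P @ S]) @ (if Q = [] then [] else [Q])"
    by simp
  have "last (P @ S) \<le> last C"
  proof (cases "S = []")
    case True
    with \<open>C = Q @ S\<close> C(1) have "last C \<in> set Q" by (simp add: column_def)
    with True show ?thesis by (simp add: Q_def)
  qed (simp add: \<open>C = Q @ S\<close>)
  then have bottoms: "\<forall>c\<in>set (T0 @ [P @ S]). last c \<le> last C"
    using Cons.prems(3) C(2) by (auto intro: order_trans)
  have rot: "rot (Some (last P)) C = S @ Q"
    and bump: "bump (Some (last P)) C = (if Q = [] then None else Some (last Q))"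
    by (simp_all add: rot_def bump_def Q_def S_def)
  show ?case
  proof (cases "Q = []")
    case True
    with step rinserts_concat[OF C(3) bottoms] show ?thesis by (simp add: rot bump)
  next
    case False
    with step Cons.IH[OF False C(3) bottoms] show ?thesis by (simp add: rot bump)
  qed
qed simp

theorem concat_Rl_Cons:
  "lps_tableau n T \<Longrightarrow> concat (Rl (x # concat T)) = x # concat (rots (Some x) T)"
  using concat_rinserts_concat[of "[x]" n 0 T "[]"] by (simp add: Rl_eq_rinserts)

lemma lps_tableau_columns: "lps_tableau_above n b T \<Longrightarrow> C \<in> set T \<Longrightarrow> column n C"
  by (simp add: lps_tableau_above_iff)

lemma lps_tableau_nonempty: "lps_tableau_above n b T \<Longrightarrow> \<forall>C\<in>set T. C \<noteq> []"
  using lps_tableau_columns by (auto simp: column_def)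

lemma lpsL_subset_lists: "lpsL n \<subseteq> lists {1..n}"
  using set_concat_lps_tableau by (fastforce simp: lpsL_eq)

lemma concat_Rl_in_lpsL: "set w \<subseteq> {1..n} \<Longrightarrow> concat (Rl w) \<in> lpsL n"
  using lps_tableau_Rl by (auto simp: lpsL_eq)

theorem lps_eq_iff_concat_Rl:
  assumes "set w \<subseteq> {1..n}" "v \<in> lpsL n"
  shows "lps_eq w v \<longleftrightarrow> v = concat (Rl w)"
proof -
  obtain T where T: "lps_tableau n T" "v = concat T"
    using assms(2) by (auto simp: lpsL_eq)
  have "Rl w = T" if "concat T = concat (Rl w)"
  proof -
    have "T = Rl (concat (Rl w))" using Rl_concat[OF T(1)] that by simp
    also have "\<dots> = Rl w" using Rl_concat[OF lps_tableau_Rl[OF assms(1)]] .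
    finally show ?thesis by simp
  qed
  then show ?thesis using T Rl_concat[OF T(1)] by (auto simp: lps_eq_def)
qed

lemma Lright_lps_eq:
  assumes "set a \<subseteq> {1..n}"
  shows "Lright lps_eq (lpsL n) a = (\<lambda>u. (u, concat (Rl (u @ a)))) ` lpsL n"
proof -
  have "u \<in> lpsL n \<and> v \<in> lpsL n \<and> lps_eq (u @ a) v \<longleftrightarrow> u \<in> lpsL n \<and> v = concat (Rl (u @ a))"
    for u v
  proof (cases "u \<in> lpsL n")
    case True
    then have "set (u @ a) \<subseteq> {1..n}" using lpsL_subset_lists assms by auto
    then show ?thesis using lps_eq_iff_concat_Rl concat_Rl_in_lpsL by blast
  qed simp
  then show ?thesis unfolding Lright_def by auto
qed

lemma Lleft_lps_eq:
  assumes "set a \<subseteq> {1..n}"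
  shows "Lleft lps_eq (lpsL n) a = (\<lambda>u. (u, concat (Rl (a @ u)))) ` lpsL n"
proof -
  have "u \<in> lpsL n \<and> v \<in> lpsL n \<and> lps_eq (a @ u) v \<longleftrightarrow> u \<in> lpsL n \<and> v = concat (Rl (a @ u))"
    for u v
  proof (cases "u \<in> lpsL n")
    case True
    then have "set (a @ u) \<subseteq> {1..n}" using lpsL_subset_lists assms by auto
    then show ?thesis using lps_eq_iff_concat_Rl concat_Rl_in_lpsL by blast
  qed simp
  then show ?thesis unfolding Lleft_def by auto
qed

lemma concat_Rl_lpsL: "u \<in> lpsL n \<Longrightarrow> concat (Rl u) = u"
  by (auto simp: lpsL_eq Rl_concat)

lemma Lright_lps_eq_Nil: "Lright lps_eq (lpsL n) [] = (\<lambda>u. (u, u)) ` lpsL n"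
  using Lright_lps_eq[of "[]" n] concat_Rl_lpsL by simp

lemma Lleft_lps_eq_Nil: "Lleft lps_eq (lpsL n) [] = (\<lambda>u. (u, u)) ` lpsL n"
  using Lleft_lps_eq[of "[]" n] concat_Rl_lpsL by simp

lemma Lright_lps_eq_single:
  "x \<in> {1..n} \<Longrightarrow>
   Lright lps_eq (lpsL n) [x] = (\<lambda>T. (concat T, concat (rinsert x T))) ` {T. lps_tableau n T}"
  using Lright_lps_eq[of "[x]" n] by (simp add: lpsL_eq image_image Rl_snoc Rl_concat)

lemma Lleft_lps_eq_single:
  "x \<in> {1..n} \<Longrightarrow>
   Lleft lps_eq (lpsL n) [x] = (\<lambda>T. (concat T, x # concat (rots (Some x) T))) ` {T. lps_tableau n T}"
  using Lleft_lps_eq[of "[x]" n] by (simp add: lpsL_eq image_image concat_Rl_Cons)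

section \<open>Transducers over column readings\<close>

fun transduce :: "('s \<Rightarrow> 'a \<Rightarrow> 'b list) \<Rightarrow> ('s \<Rightarrow> 'a \<Rightarrow> 's) \<Rightarrow> ('s \<Rightarrow> 'b list) \<Rightarrow> 's \<Rightarrow> 'a list \<Rightarrow> 'b list"
  where
  "transduce out nxt fin s [] = fin s"
| "transduce out nxt fin s (C # T) = out s C @ transduce out nxt fin (nxt s C) T"

theorem regular_transduce:
  fixes out :: "'s \<Rightarrow> nat list \<Rightarrow> 'b list"
  assumes "finite S" "finite \<Gamma>" "s0 \<in> S"
    and step: "\<And>s C. s \<in> S \<Longrightarrow> column n C \<Longrightarrow>
      nxt s C \<in> S \<and> set (out s C) \<subseteq> \<Gamma> \<and> length (out s C) \<le> N"
    and final: "\<And>s. s \<in> S \<Longrightarrow> set (fin s) \<subseteq> \<Gamma> \<and> length (fin s) \<le> N"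
  shows "regular_over \<Gamma> (transduce out nxt fin s0 ` {T. lps_tableau n T})"
proof -
  text \<open>One block per column; the state also records the current bottom entry, which enforces
    the tableau condition on the input.\<close>
  define A where "A q blk q' \<longleftrightarrow> (case q of None \<Rightarrow> False | Some (s, b) \<Rightarrow>
      (\<exists>C. column n C \<and> b \<le> last C \<and> blk = out s C \<and> q' = Some (nxt s C, last C)) \<or>
      (blk = fin s \<and> q' = None))" for q blk q'
  have stuck: "w = []" if "block_reach A q w q'" "q = None" for q w q'
    using that by (induction rule: block_reach.induct) (simp_all add: A_def)
  have sound: "\<exists>T. lps_tableau_above n b T \<and> w = transduce out nxt fin s T"
    if "block_reach A q w q'" "q' = None" "q = Some (s, b)" for q w q' s b
    using that
  proof (induction arbitrary: s b rule: block_reach.induct)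
    case (block_reach_step q blk q'' w q')
    from block_reach_step.hyps(1) block_reach_step.prems(2)
    consider C where "column n C" "b \<le> last C" "blk = out s C" "q'' = Some (nxt s C, last C)"
      | "blk = fin s" "q'' = None"
      by (auto simp: A_def)
    then show ?case
    proof cases
      case 1
      with block_reach_step.IH block_reach_step.prems(1) obtain T where "lps_tableau_above n (last C) T"
        "w = transduce out nxt fin (nxt s C) T"
        by blast
      with 1 show ?thesis by (intro exI[of _ "C # T"]) simp
    next
      case 2
      with block_reach_step.hyps(2) stuck have "w = []" by blast
      with 2 show ?thesis by (intro exI[of _ "[]"]) simp
    qed
  qed simp
  have complete: "block_reach A (Some (s, b)) (transduce out nxt fin s T) None"
    if "lps_tableau_above n b T" for s b T
    using that
  proof (induction T arbitrary: s b)
    case Nil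
    have "A (Some (s, b)) (fin s) None" by (simp add: A_def)
    with block_reach.block_reach_step[OF this block_reach_Nil[of A None]] show ?case by simp
  next
    case (Cons C T)
    then have "A (Some (s, b)) (out s C) (Some (nxt s C, last C))" by (auto simp: A_def)
    with Cons show ?case by (simp add: block_reach.block_reach_step)
  qed
  have "transduce out nxt fin s0 ` {T. lps_tableau n T} = {w. block_reach A (Some (s0, 0)) w None}"
  proof (intro set_eqI iffI)
    fix w assume "w \<in> transduce out nxt fin s0 ` {T. lps_tableau n T}"
    then obtain T where "lps_tableau n T" "w = transduce out nxt fin s0 T" by blast
    then show "w \<in> {w. block_reach A (Some (s0, 0)) w None}" using complete by simp
  next
    fix w assume "w \<in> {w. block_reach A (Some (s0, 0)) w None}"
    then obtain T where "lps_tableau n T" "w = transduce out nxt fin s0 T"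
      using sound by blast
    then show "w \<in> transduce out nxt fin s0 ` {T. lps_tableau n T}" by blast
  qed
  moreover have "regular_over \<Gamma> {w. block_reach A (Some (s0, 0)) w None}"
  proof (rule regular_block_reach[where S = "insert None (Some ` (S \<times> {0..n}))" and N = N])
    fix q blk q' assume q: "q \<in> insert None (Some ` (S \<times> {0..n}))" and "A q blk q'"
    then obtain s b where s: "q = Some (s, b)" "s \<in> S" by (auto simp: A_def)
    with \<open>A q blk q'\<close> consider C where "column n C" "blk = out s C" "q' = Some (nxt s C, last C)"
      | "blk = fin s" "q' = None"
      by (auto simp: A_def)
    then show "q' \<in> insert None (Some ` (S \<times> {0..n})) \<and> set blk \<subseteq> \<Gamma> \<and> length blk \<le> N"
    proof cases
      case 1
      with step[OF s(2) 1(1)] last_column[OF 1(1)] show ?thesis by auto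
    qed (use final s in auto)
  qed (use assms in auto)
  ultimately show ?thesis by simp
qed

section \<open>Regularity of the multiplication languages\<close>

lemma finite_pad_alphabet [simp]: "finite \<Sigma> \<Longrightarrow> finite (pad_alphabet \<Sigma>)"
  by (simp add: pad_alphabet_def)

lemma set_zip_pad_alphabet:
  "set xs \<subseteq> insert None (Some ` \<Sigma>) \<Longrightarrow> set ys \<subseteq> insert None (Some ` \<Sigma>) \<Longrightarrow>
   set (zip xs ys) \<subseteq> pad_alphabet \<Sigma>"
  unfolding pad_alphabet_def using set_zip_leftD set_zip_rightD by fastforce

lemma set_zip_Some_pad_alphabet:
  "set xs \<subseteq> \<Sigma> \<Longrightarrow> set ys \<subseteq> \<Sigma> \<Longrightarrow> set (zip (map Some xs) (map Some ys)) \<subseteq> pad_alphabet \<Sigma>"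
  by (rule set_zip_pad_alphabet) auto

lemma zip_Some_self: "zip (map Some u) (map Some u) = map (\<lambda>a. (Some a, Some a)) u"
  by (induction u) auto

lemma deltaR_self: "deltaR u u = map (\<lambda>a. (Some a, Some a)) u"
  by (simp add: deltaR_def zip_Some_self)

lemma deltaL_self: "deltaL u u = map (\<lambda>a. (Some a, Some a)) u"
  by (simp add: deltaL_def zip_Some_self)

lemma deltaR_append_self:
  "deltaR (C @ u) (C @ v) = map (\<lambda>a. (Some a, Some a)) C @ deltaR u v"
  by (induction C) (simp_all add: deltaR_def Let_def)

lemma deltaR_Suc_length:
  "length v = Suc (length u) \<Longrightarrow> deltaR u v = zip (map Some u @ [None]) (map Some v)"
  by (simp add: deltaR_def Let_def)

lemma deltaL_Suc_length:
  "length v = Suc (length u) \<Longrightarrow> deltaL u v = zip (None # map Some u) (map Some v)"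
  by (simp add: deltaL_def Let_def)

lemma zip_append_Cons_shift:
  assumes "xs \<noteq> []" "length zs = length xs"
  shows "zip (xs @ ys) (c # zs @ ws) = zip xs (c # butlast zs) @ zip ys (last zs # ws)"
proof -
  have "zs \<noteq> []" using assms by auto
  then have "c # zs @ ws = (c # butlast zs) @ (last zs # ws)" by simp
  then show ?thesis by (simp only:) (rule zip_append, simp add: assms)
qed

lemma zip_Cons_append_shift:
  assumes "xs \<noteq> []" "length zs = length xs"
  shows "zip (a # xs @ ys) (zs @ ws) = zip (a # butlast xs) zs @ zip (last xs # ys) ws"
proof -
  have "a # xs @ ys = (a # butlast xs) @ (last xs # ys)" using assms by simp
  then show ?thesis by (simp only:) (rule zip_append, simp add: assms)
qed

lemma length_concat_rinsert: "length (concat (rinsert x T)) = Suc (length (concat T))"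
  by (induction T) auto

lemma length_concat_rots: "length (concat (rots t T)) = length (concat T)"
  by (induction T arbitrary: t) auto

lemma regular_map_lpsL:
  assumes "finite \<Gamma>" "g ` {1..n} \<subseteq> \<Gamma>"
  shows "regular_over \<Gamma> (map g ` lpsL n)"
proof -
  have "transduce (\<lambda>_ C. map g C) (\<lambda>s _. s) (\<lambda>_. []) () T = map g (concat T)" for T
    by (induction T) simp_all
  then have "map g ` lpsL n = transduce (\<lambda>_ C. map g C) (\<lambda>s _. s) (\<lambda>_. []) () ` {T. lps_tableau n T}"
    by (simp add: lpsL_eq image_image)
  also have "regular_over \<Gamma> \<dots>"
  proof (rule regular_transduce[where S = "{()}" and N = n])
    fix s :: unit and C assume C: "column n C"
    then have "set (map g C) \<subseteq> \<Gamma>"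
      using assms(2) by (metis column_def image_mono order_trans set_map)
    with C show "s \<in> {()} \<and> set (map g C) \<subseteq> \<Gamma> \<and> length (map g C) \<le> n"
      using length_column_le by simp
  qed (use assms(1) in auto)
  finally show ?thesis .
qed

text \<open>Right multiplication by x: columns are copied until the first one with bottom entry above x;
  after it every letter of u is paired with the letter preceding it in v, so the state carries
  the letter still owed to v (None before the insertion point).\<close>

lemma regular_deltaR_rinsert:
  assumes x: "x \<in> {1..n}"
  shows "regular_over (pad_alphabet {1..n})
    ((\<lambda>T. deltaR (concat T) (concat (rinsert x T))) ` {T. lps_tableau n T})"
proof -
  define out where "out s C = (case s of None \<Rightarrow> map (\<lambda>a. (Some a, Some a)) C
      | Some c \<Rightarrow> zip (map Some C) (map Some (c # butlast C)))" for s :: "nat option" and C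
  define nxt where "nxt s C = (case s of None \<Rightarrow> if x < last C then Some x else None
      | Some c \<Rightarrow> Some (last C))" for s :: "nat option" and C :: "nat list"
  define fin where "fin s = [(None :: nat option, Some (case s of None \<Rightarrow> x | Some c \<Rightarrow> c))]" for s
  have carry: "transduce out nxt fin (Some c) T = zip (map Some (concat T) @ [None]) (map Some (c # concat T))"
    if "\<forall>C\<in>set T. C \<noteq> []" for c T
    using that
    by (induction T arbitrary: c)
      (simp_all add: out_def nxt_def fin_def zip_append_Cons_shift map_butlast last_map)
  have eq: "transduce out nxt fin None T = deltaR (concat T) (concat (rinsert x T))"
    if "\<forall>C\<in>set T. C \<noteq> []" for T
    using that
  proof (induction T)
    case (Cons C T)
    show ?case
    proof (cases "x < last C")
      case True
      then have "out None C = map (\<lambda>a. (Some a, Some a)) C" "nxt None C = Some x"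
        by (simp_all add: out_def nxt_def)
      with True show ?thesis using Cons.prems carry[of T x]
        by (simp add: deltaR_append_self deltaR_Suc_length)
    next
      case False
      then have "out None C = map (\<lambda>a. (Some a, Some a)) C" "nxt None C = None"
        by (simp_all add: out_def nxt_def)
      with False show ?thesis using Cons by (simp add: deltaR_append_self)
    qed
  qed (simp add: fin_def deltaR_def)
  have "(\<lambda>T. deltaR (concat T) (concat (rinsert x T))) ` {T. lps_tableau n T} =
    transduce out nxt fin None ` {T. lps_tableau n T}"
    by (rule image_cong[OF refl]) (simp add: eq lps_tableau_nonempty)
  also have "regular_over (pad_alphabet {1..n}) \<dots>"
  proof (rule regular_transduce[where S = "insert None (Some ` {1..n})" and N = "Suc n"])
    fix s C assume s: "s \<in> insert None (Some ` {1..n})" and C: "column n C"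
    have C_letters: "set C \<subseteq> {1..n}" "last C \<in> {1..n}"
      using C last_column[OF C] by (simp_all add: column_def)
    show "nxt s C \<in> insert None (Some ` {1..n}) \<and> set (out s C) \<subseteq> pad_alphabet {1..n} \<and>
        length (out s C) \<le> Suc n"
    proof (cases s)
      case None
      with C_letters x length_column_le[OF C] show ?thesis
        by (auto simp: out_def nxt_def pad_alphabet_def)
    next
      case (Some c)
      with s have "set (c # butlast C) \<subseteq> {1..n}"
        using C_letters(1) in_set_butlastD by fastforce
      with C_letters(1) have "set (out s C) \<subseteq> pad_alphabet {1..n}"
        unfolding Some out_def option.case by (rule set_zip_Some_pad_alphabet)
      with Some C_letters length_column_le[OF C] show ?thesis
        by (simp add: out_def nxt_def)
    qed
  qed (use x in \<open>auto simp: fin_def pad_alphabet_def\<close>)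
  finally show ?thesis .
qed

text \<open>Right multiplication by x, padded on the left: v is u with x inserted, so u shifted one
  place to the right is copied letter by letter up to the insertion point and exactly afterwards;
  the state remembers the last letter of u read so far, or that x has been inserted.\<close>

lemma regular_deltaL_rinsert:
  assumes x: "x \<in> {1..n}"
  shows "regular_over (pad_alphabet {1..n})
    ((\<lambda>T. deltaL (concat T) (concat (rinsert x T))) ` {T. lps_tableau n T})"
proof -
  define out where "out s C = (if snd s then map (\<lambda>a. (Some a, Some a)) C
      else zip (fst s # map Some (butlast C)) (map Some C) @
        (if x < last C then [(Some (last C), Some x)] else []))"
    for s :: "nat option \<times> bool" and C
  define nxt where "nxt s C = (if snd s \<or> x < last C then (None, True) else (Some (last C), False))"
    for s :: "nat option \<times> bool" and C :: "nat list"
  define fin where "fin s = (if snd s then [] else [(fst s, Some x)])" for s :: "nat option \<times> bool"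
  have copy: "transduce out nxt fin (p, True) T = map (\<lambda>a. (Some a, Some a)) (concat T)" for p T
    by (induction T arbitrary: p) (simp_all add: out_def nxt_def fin_def)
  have eq: "transduce out nxt fin (p, False) T =
      zip (p # map Some (concat T)) (map Some (concat (rinsert x T)))"
    if "\<forall>C\<in>set T. C \<noteq> []" for p T
    using that
  proof (induction T arbitrary: p)
    case (Cons C T)
    have shift: "zip (p # map Some (C @ u)) (map Some (C @ v)) =
        zip (p # map Some (butlast C)) (map Some C) @ zip (Some (last C) # map Some u) (map Some v)"
      for u v
      using zip_Cons_append_shift[of "map Some C" "map Some C" p "map Some u" "map Some v"] Cons.prems
      by (simp add: map_butlast last_map)
    show ?case
    proof (cases "x < last C")
      case True
      then have "out (p, False) C = zip (p # map Some (butlast C)) (map Some C) @ [(Some (last C), Some x)]"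
        "nxt (p, False) C = (None, True)"
        by (simp_all add: out_def nxt_def)
      with True show ?thesis using shift[of "concat T" "x # concat T"] copy[of None T]
        by (simp add: zip_Some_self)
    next
      case False
      then have "out (p, False) C = zip (p # map Some (butlast C)) (map Some C)"
        "nxt (p, False) C = (Some (last C), False)"
        by (simp_all add: out_def nxt_def)
      with False show ?thesis using shift[of "concat T" "concat (rinsert x T)"] Cons
        by simp
    qed
  qed (simp add: fin_def)
  have "(\<lambda>T. deltaL (concat T) (concat (rinsert x T))) ` {T. lps_tableau n T} =
    transduce out nxt fin (None, False) ` {T. lps_tableau n T}"
    by (rule image_cong[OF refl])
      (simp add: eq lps_tableau_nonempty deltaL_Suc_length length_concat_rinsert)
  also have "regular_over (pad_alphabet {1..n}) \<dots>"
  proof (rule regular_transduce[where S = "insert None (Some ` {1..n}) \<times> (UNIV :: bool set)" and N = "Suc n"])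
    fix s C assume s: "s \<in> insert None (Some ` {1..n}) \<times> (UNIV :: bool set)" and C: "column n C"
    have C_letters: "set C \<subseteq> {1..n}" "last C \<in> {1..n}"
      using C last_column[OF C] by (simp_all add: column_def)
    show "nxt s C \<in> insert None (Some ` {1..n}) \<times> (UNIV :: bool set) \<and> set (out s C) \<subseteq> pad_alphabet {1..n} \<and>
        length (out s C) \<le> Suc n"
    proof (cases "snd s")
      case True
      with C_letters length_column_le[OF C] show ?thesis
        by (auto simp: out_def nxt_def pad_alphabet_def)
    next
      case False
      have "set (fst s # map Some (butlast C)) \<subseteq> insert None (Some ` {1..n})"
        using s C_letters(1) in_set_butlastD by fastforce
      then have "set (zip (fst s # map Some (butlast C)) (map Some C)) \<subseteq> pad_alphabet {1..n}"
        using C_letters(1) by (intro set_zip_pad_alphabet) auto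
      moreover have "(Some (last C), Some x) \<in> pad_alphabet {1..n}"
        using C_letters(2) x by (simp add: pad_alphabet_def)
      ultimately show ?thesis
        using False C_letters length_column_le[OF C] by (auto simp: out_def nxt_def)
    qed
  qed (use x in \<open>auto simp: fin_def pad_alphabet_def\<close>)
  finally show ?thesis .
qed

text \<open>Left multiplication by x, padded on the right: v = x # (u with every column rotated), so each
  letter of u faces the preceding letter of the rotated reading; the state is the rotation threshold
  together with that preceding letter.\<close>

lemma regular_deltaR_rots:
  assumes x: "x \<in> {1..n}"
  shows "regular_over (pad_alphabet {1..n})
    ((\<lambda>T. deltaR (concat T) (x # concat (rots (Some x) T))) ` {T. lps_tableau n T})"
proof -
  define out where "out s C = zip (map Some C) (map Some (snd s # butlast (rot (fst s) C)))"
    for s :: "nat option \<times> nat" and C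
  define nxt where "nxt s C = (bump (fst s) C, last (rot (fst s) C))"
    for s :: "nat option \<times> nat" and C
  define fin where "fin s = [(None :: nat option, Some (snd s))]" for s :: "nat option \<times> nat"
  have eq: "transduce out nxt fin (t, c) T =
      zip (map Some (concat T) @ [None]) (map Some (c # concat (rots t T)))"
    if "\<forall>C\<in>set T. C \<noteq> []" for t c T
    using that
    by (induction T arbitrary: t c)
      (simp_all add: out_def nxt_def fin_def zip_append_Cons_shift map_butlast last_map)
  have "(\<lambda>T. deltaR (concat T) (x # concat (rots (Some x) T))) ` {T. lps_tableau n T} =
    transduce out nxt fin (Some x, x) ` {T. lps_tableau n T}"
    by (rule image_cong[OF refl])
      (simp add: eq lps_tableau_nonempty deltaR_Suc_length length_concat_rots)
  also have "regular_over (pad_alphabet {1..n}) \<dots>"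
  proof (rule regular_transduce[where S = "insert None (Some ` {1..n}) \<times> {1..n}" and N = "Suc n"])
    fix s C assume s: "s \<in> insert None (Some ` {1..n}) \<times> {1..n}" and C: "column n C"
    have C_letters: "set C \<subseteq> {1..n}" "C \<noteq> []"
      using C by (simp_all add: column_def)
    then have "last (rot (fst s) C) \<in> {1..n}"
      using last_in_set[of "rot (fst s) C"] by auto
    moreover have "bump (fst s) C \<in> insert None (Some ` {1..n})"
      using bump_in[of "fst s" C] C_letters(1) by auto
    moreover have "set (snd s # butlast (rot (fst s) C)) \<subseteq> {1..n}"
      using s C_letters(1) in_set_butlastD[of _ "rot (fst s) C"] by auto
    then have "set (out s C) \<subseteq> pad_alphabet {1..n}"
      unfolding out_def using C_letters(1) by (rule set_zip_Some_pad_alphabet[rotated])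
    ultimately show "nxt s C \<in> insert None (Some ` {1..n}) \<times> {1..n} \<and>
        set (out s C) \<subseteq> pad_alphabet {1..n} \<and> length (out s C) \<le> Suc n"
      using length_column_le[OF C] by (simp add: out_def nxt_def mem_Times_iff)
  qed (use x in \<open>auto simp: fin_def pad_alphabet_def\<close>)
  finally show ?thesis .
qed

lemma regular_deltaL_rots:
  assumes x: "x \<in> {1..n}"
  shows "regular_over (pad_alphabet {1..n})
    ((\<lambda>T. deltaL (concat T) (x # concat (rots (Some x) T))) ` {T. lps_tableau n T})"
proof -
  define out where "out t C = zip (map Some C) (map Some (rot t C))" for t C
  have eq: "transduce out bump (\<lambda>_. []) t T = zip (map Some (concat T)) (map Some (concat (rots t T)))"
    for t T
    by (induction T arbitrary: t) (simp_all add: out_def zip_append)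
  have "(\<lambda>T. deltaL (concat T) (x # concat (rots (Some x) T))) ` {T. lps_tableau n T} =
    (#) (None, Some x) ` (transduce out bump (\<lambda>_. []) (Some x) ` {T. lps_tableau n T})"
    unfolding image_image
    by (rule image_cong[OF refl]) (simp add: eq deltaL_Suc_length length_concat_rots)
  also have "regular_over (pad_alphabet {1..n}) \<dots>"
  proof (rule regular_over_Cons)
    show "regular_over (pad_alphabet {1..n}) (transduce out bump (\<lambda>_. []) (Some x) ` {T. lps_tableau n T})"
    proof (rule regular_transduce[where S = "insert None (Some ` {1..n})" and N = n])
      fix t C assume C: "column n C"
      then have "set C \<subseteq> {1..n}" by (simp add: column_def)
      then have "set (out t C) \<subseteq> pad_alphabet {1..n}"
        unfolding out_def by (intro set_zip_Some_pad_alphabet) auto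
      with \<open>set C \<subseteq> {1..n}\<close> show "bump t C \<in> insert None (Some ` {1..n}) \<and>
          set (out t C) \<subseteq> pad_alphabet {1..n} \<and> length (out t C) \<le> n"
        using bump_in[of t C] length_column_le[OF C] by (auto simp: out_def)
    qed (use x in auto)
  qed (use x in \<open>simp add: pad_alphabet_def\<close>)
  finally show ?thesis .
qed

lemma regular_multiplication_languages:
  assumes "a \<in> insert [] ((\<lambda>x. [x]) ` {1..n})"
  shows "regular_over (pad_alphabet {1..n}) ((\<lambda>(u, v). deltaR u v) ` Lright lps_eq (lpsL n) a) \<and>
    regular_over (pad_alphabet {1..n}) ((\<lambda>(u, v). deltaR u v) ` Lleft lps_eq (lpsL n) a) \<and>
    regular_over (pad_alphabet {1..n}) ((\<lambda>(u, v). deltaL u v) ` Lright lps_eq (lpsL n) a) \<and>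
    regular_over (pad_alphabet {1..n}) ((\<lambda>(u, v). deltaL u v) ` Lleft lps_eq (lpsL n) a)"
proof -
  consider "a = []" | x where "x \<in> {1..n}" "a = [x]" using assms by blast
  then show ?thesis
  proof cases
    case 1
    have "regular_over (pad_alphabet {1..n}) (map (\<lambda>a. (Some a, Some a)) ` lpsL n)"
      by (rule regular_map_lpsL) (auto simp: pad_alphabet_def)
    with 1 show ?thesis
      by (simp add: Lright_lps_eq_Nil Lleft_lps_eq_Nil image_image deltaR_self deltaL_self)
  next
    case 2
    with regular_deltaR_rinsert regular_deltaL_rinsert regular_deltaR_rots regular_deltaL_rots
    show ?thesis by (simp add: Lright_lps_eq_single Lleft_lps_eq_single image_image)
  qed
qed

theorem theorem6p7:
  fixes n :: nat
  shows "biautomatic_structure {1..n} lps_eq (lpsL n)"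
proof -
  have "regular_over {1..n} (lpsL n)"
    using regular_map_lpsL[of "{1..n}" id n] by simp
  moreover have "\<exists>u\<in>lpsL n. lps_eq w u" if "w \<in> lists {1..n}" for w
  proof -
    have "set w \<subseteq> {1..n}" using that by auto
    then show ?thesis using concat_Rl_in_lpsL lps_eq_iff_concat_Rl by blast
  qed
  ultimately show ?thesis
    unfolding biautomatic_structure_def using regular_multiplication_languages by simp
qed

end
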